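(* Let $\Delta\in\mathfrak{t}_{\mathrm{loc}}$ and $A\in\mathbb{C}^{2^n\times 2^n}$ satisfy $[\Delta,A]=i\varphi A$ for some $\varphi\in\mathbb{Q}$. Then there exists a rational $\Delta'\in\mathfrak{t}_{\mathrm{loc}}$, i.e. $\Delta'=i\cdot\mathrm{diag}(\mu_1,\dots,\mu_{2^n})$ with all $\mu_k\in\mathbb{Q}$, such that $[\Delta',A]=i\varphi A$.
   Context: $\mathfrak{t}_{\mathrm{loc}}$ is the set of diagonal matrices in the Lie algebra of $SU(2)\otimes\cdots\otimes SU(2)$ ($n$ factors), i.e. all matrices $\sum_{j=1}^n I_2\otimes\cdots\otimes I_2\otimes\mathrm{diag}(i\lambda_j,-i\lambda_j)\otimes I_2\otimes\cdots\otimes I_2$ (the diagonal factor in the $j$-th position) with $\lambda_j\in\mathbb{R}$. $[X,Y]=XY-YX$. *)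

theory Defs
  imports "Jordan_Normal_Form.Matrix"
begin

text \<open>In the Kronecker ordering of the tensor product of n copies of C^2, the j-th
  tensor factor (j = 0..n-1, counted from the left) corresponds to bit (n-1-j)
  of the index k.  The factor diag(i lambda, -i lambda) contributes +i lambda
  if that bit is 0 and -i lambda if it is 1.\<close>

definition tensor_sign :: "nat \<Rightarrow> nat \<Rightarrow> nat \<Rightarrow> real" where
  "tensor_sign n j k = (if (k div 2 ^ (n - 1 - j)) mod 2 = 0 then 1 else -1)"

text \<open>The element sum_j I x .. x diag(i lambda_j, -i lambda_j) x .. x I of t_loc.\<close>
definition tloc_elem :: "nat \<Rightarrow> (nat \<Rightarrow> real) \<Rightarrow> complex mat" where
  "tloc_elem n lam = mat (2 ^ n) (2 ^ n)
     (\<lambda>(r, c). if r = c then \<i> * complex_of_real (\<Sum>j<n. lam j * tensor_sign n j r) else 0)"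

definition t_loc :: "nat \<Rightarrow> complex mat set" where
  "t_loc n = {tloc_elem n lam | lam. True}"

text \<open>i * diag(mu_1, ..., mu_{2^n}) (0-indexed).\<close>
definition i_diag :: "nat \<Rightarrow> (nat \<Rightarrow> real) \<Rightarrow> complex mat" where
  "i_diag n mu = mat (2 ^ n) (2 ^ n)
     (\<lambda>(r, c). if r = c then \<i> * complex_of_real (mu r) else 0)"

definition commutator :: "complex mat \<Rightarrow> complex mat \<Rightarrow> complex mat" where
  "commutator X Y = X * Y - Y * X"

end

theory Submission
  imports Defs
begin

text \<open>Regard \<open>\<real>\<close> as a vector space over \<open>\<rat>\<close> and choose a \<open>\<rat>\<close>-linear functional
  \<open>g : \<real> \<rightarrow> \<rat>\<close> with \<open>g 1 = 1\<close>. Up to the factor \<open>i\<close>, the diagonal entries of \<open>\<Delta>\<close>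
  are \<open>\<plusminus>1\<close>-combinations of the \<open>\<lambda>\<^sub>j\<close>, and \<open>[\<Delta>, A] = i\<phi>A\<close> says exactly that the
  difference of the \<open>r\<close>-th and \<open>c\<close>-th such entry is \<open>\<phi>\<close> whenever \<open>A\<^sub>r\<^sub>c \<noteq> 0\<close>.
  Applying \<open>g\<close> to the \<open>\<lambda>\<^sub>j\<close> therefore preserves all these linear constraints, since
  \<open>g \<phi> = \<phi>\<close>, and makes every entry rational.\<close>

lemma exists_rat_valued_rat_linear_functional:
  "\<exists>g :: real \<Rightarrow> real. additive g \<and> (\<forall>q\<in>\<rat>. \<forall>x. g (q * x) = q * g x) \<and> range g \<subseteq> \<rat> \<and> g 1 = 1"
proof -
  interpret V: vector_space_pair "\<lambda>(r::rat) (x::real). of_rat r * x" "(*) :: rat \<Rightarrow> rat \<Rightarrow> rat"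
    by unfold_locales (auto simp: algebra_simps of_rat_add of_rat_mult)
  have "V.vs1.independent {1::real}"
    by simp
  from V.linear_independent_extend[OF this, of "\<lambda>_. 1"] obtain g where
    lin: "Vector_Spaces.linear (\<lambda>(r::rat) (x::real). of_rat r * x) ((*) :: rat \<Rightarrow> rat \<Rightarrow> rat) g"
    and g1: "g 1 = 1"
    by auto
  have "additive (of_rat \<circ> g)"
    by unfold_locales (simp add: V.linear_add[OF lin] of_rat_add)
  moreover have "(of_rat \<circ> g) (q * x) = q * (of_rat \<circ> g) x" if "q \<in> \<rat>" for q x
    using that V.linear_scale[OF lin] by (auto elim!: Rats_cases simp: of_rat_mult)
  ultimately show ?thesis
    using g1 by (intro exI[of _ "of_rat \<circ> g"]) auto
qed

lemma commutator_mat_diag_index: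
  fixes f :: "nat \<Rightarrow> complex"
  assumes "A \<in> carrier_mat N N" and "r < N" and "c < N"
  shows "commutator (mat_diag N f) A $$ (r, c) = (f r - f c) * A $$ (r, c)"
  using assms by (simp add: commutator_def mat_diag_mult_left mat_diag_mult_right algebra_simps)

lemma commutator_mat_diag_eq_smult_iff:
  fixes f :: "nat \<Rightarrow> complex"
  assumes A: "A \<in> carrier_mat N N"
  shows "commutator (mat_diag N f) A = z \<cdot>\<^sub>m A \<longleftrightarrow>
    (\<forall>r<N. \<forall>c<N. A $$ (r, c) \<noteq> 0 \<longrightarrow> f r - f c = z)"
proof -
  have entry: "commutator (mat_diag N f) A $$ (r, c) = (z \<cdot>\<^sub>m A) $$ (r, c) \<longleftrightarrow>
      (A $$ (r, c) \<noteq> 0 \<longrightarrow> f r - f c = z)" if "r < N" "c < N" for r c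
    using A that by (auto simp: commutator_mat_diag_index)
  have "commutator (mat_diag N f) A \<in> carrier_mat N N"
    using A unfolding commutator_def by (intro minus_carrier_mat mult_carrier_mat) auto
  then show ?thesis
    using A by (auto simp: entry[symmetric] intro!: eq_matI)
qed

definition tloc_weight :: "nat \<Rightarrow> (nat \<Rightarrow> real) \<Rightarrow> nat \<Rightarrow> real" where
  "tloc_weight n lam k = (\<Sum>j<n. lam j * tensor_sign n j k)"

lemma tloc_elem_eq_i_diag: "tloc_elem n lam = i_diag n (tloc_weight n lam)"
  unfolding tloc_elem_def i_diag_def tloc_weight_def ..

lemma i_diag_eq_mat_diag: "i_diag n mu = mat_diag (2 ^ n) (\<lambda>k. \<i> * complex_of_real (mu k))"
  by (auto simp: i_diag_def mat_diag_def intro!: cong_mat)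

lemma commutator_i_diag_eq_smult_iff:
  assumes "A \<in> carrier_mat (2 ^ n) (2 ^ n)"
  shows "commutator (i_diag n mu) A = (\<i> * complex_of_real phi) \<cdot>\<^sub>m A \<longleftrightarrow>
    (\<forall>r<2 ^ n. \<forall>c<2 ^ n. A $$ (r, c) \<noteq> 0 \<longrightarrow> mu r - mu c = phi)"
proof -
  have "\<i> * complex_of_real a - \<i> * complex_of_real b = \<i> * complex_of_real phi \<longleftrightarrow> a - b = phi"
    for a b
    by (simp only: right_diff_distrib[symmetric] of_real_diff[symmetric] mult_cancel_left of_real_eq_iff)
      simp
  then show ?thesis
    by (simp add: i_diag_eq_mat_diag commutator_mat_diag_eq_smult_iff[OF assms])
qed

lemma tensor_sign_Rats: "tensor_sign n j k \<in> \<rat>"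
  by (simp add: tensor_sign_def)

lemma rat_linear_tloc_weight:
  assumes "additive g" and "\<forall>q\<in>\<rat>. \<forall>x. g (q * x) = q * g x"
  shows "g (tloc_weight n lam k) = tloc_weight n (g \<circ> lam) k"
  using assms tensor_sign_Rats
  by (simp add: tloc_weight_def additive.sum mult.commute[of _ "tensor_sign n _ k"])

theorem lemma3p6:
  fixes n :: nat and Delta A :: "complex mat" and phi :: real
  assumes "Delta \<in> t_loc n"
    and "A \<in> carrier_mat (2 ^ n) (2 ^ n)"
    and "phi \<in> \<rat>"
    and "commutator Delta A = (\<i> * complex_of_real phi) \<cdot>\<^sub>m A"
  shows "\<exists>Delta' \<in> t_loc n. (\<exists>mu :: nat \<Rightarrow> real.
           (\<forall>k < 2 ^ n. mu k \<in> \<rat>) \<and> Delta' = i_diag n mu \<and>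
           commutator Delta' A = (\<i> * complex_of_real phi) \<cdot>\<^sub>m A)"
proof -
  obtain lam where Delta: "Delta = tloc_elem n lam"
    using assms(1) by (auto simp: t_loc_def)
  obtain g :: "real \<Rightarrow> real" where g_add: "additive g" and g_hom: "\<forall>q\<in>\<rat>. \<forall>x. g (q * x) = q * g x"
    and g_rat: "range g \<subseteq> \<rat>" and g_one: "g 1 = 1"
    using exists_rat_valued_rat_linear_functional by blast
  have "g (phi * 1) = phi * g 1"
    using g_hom assms(3) by blast
  then have g_phi: "g phi = phi"
    by (simp add: g_one)
  define mu where "mu = tloc_weight n (g \<circ> lam)"
  have mu: "mu k = g (tloc_weight n lam k)" for k
    unfolding mu_def by (rule rat_linear_tloc_weight[OF g_add g_hom, symmetric])
  have "\<forall>r<2 ^ n. \<forall>c<2 ^ n. A $$ (r, c) \<noteq> 0 \<longrightarrow> tloc_weight n lam r - tloc_weight n lam c = phi"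
    using assms(4) by (simp add: Delta tloc_elem_eq_i_diag commutator_i_diag_eq_smult_iff[OF assms(2)])
  then have "\<forall>r<2 ^ n. \<forall>c<2 ^ n. A $$ (r, c) \<noteq> 0 \<longrightarrow> mu r - mu c = phi"
    by (simp add: mu g_phi flip: additive.diff[OF g_add])
  then have "commutator (tloc_elem n (g \<circ> lam)) A = (\<i> * complex_of_real phi) \<cdot>\<^sub>m A"
    by (simp add: tloc_elem_eq_i_diag mu_def commutator_i_diag_eq_smult_iff[OF assms(2)])
  moreover have "mu k \<in> \<rat>" for k
    using g_rat by (auto simp: mu)
  ultimately show ?thesis
    by (auto simp: t_loc_def tloc_elem_eq_i_diag mu_def)
qed

end
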